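(* Let $n\ge1$, $s\in\{1,\dots,n\}$ and let $C\in\mathbb{R}^{n\times n}$ be symmetric positive definite. Let $x^*$ be an optimal solution of the problem defining $\hat z(\lambda_{\min}(C))$, and let $\lambda^*=(\lambda^*_1\ge\dots\ge\lambda^*_n)\in\mathbb{R}^n_+$ be the eigenvalues of $M_{\lambda_{\min}(C)}(x^* )$ in nonincreasing order (with $\lambda^*_{n+1}:=0$ if $s=n$). Then $$\hat z^D(\lambda_{\min}(C))-\hat z(\lambda_{\min}(C))\ge\Theta^{lb}:=\Big(\frac{1}{\lambda^*_{s+1}+\lambda_{\min}(C)}-\frac{1}{\lambda^*_s+\lambda_{\min}(C)}\Big)\sum_{i=s+1}^n\lambda^*_i\ge0.$$
   Context: $\lambda_{\min}(C)$ is the smallest eigenvalue of $C$. For $0\le t\le\lambda_{\min}(C)$ let $A(t)\in\mathbb{R}^{n\times n}$ be a Cholesky factor of $C-tI$ (so $C-tI=A(t)^\top A(t)$), with $i$-th column $a_i(t)$, and for $x\in[0,1]^n$ let $M_t(x)=\sum_i x_i a_i(t)a_i(t)^\top$. For a positive semidefinite $X$ with eigenvalues $\lambda_1(X)\ge\dots\ge\lambda_n(X)$, $\Phi_s(X;t)=\sum_{i=1}^s\log(\lambda_i(X)+t)$ (natural log); $\widehat{\Phi}_s(\cdot\,;t)$ is its concave envelope on the cone of $n\times n$ positive semidefinite matrices (pointwise infimum of all concave functions there that are $\ge\Phi_s(\cdot\,;t)$). $\hat z(t)=\max\{\widehat{\Phi}_s(M_t(x);t) : x\in[0,1]^n,\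 \sum_i x_i=s\}$, and for $t>0$, $\hat z^D(t)=\max\{\log\det(M_t(x)+tI) : x\in[0,1]^n,\ \sum_i x_i=s\}-(n-s)\log(t)$. *)

theory Defs
  imports "HOL-Analysis.Analysis"
begin

text \<open>Eigenvalues (with multiplicity) of an n x n matrix, n = CARD('n), listed in
nonincreasing order as lam 1 >= ... >= lam n, characterised via the characteristic
polynomial; entries outside 1..n are set to 0 (so lam (n+1) = 0).\<close>
definition is_sorted_eigs :: "real^'n^'n \<Rightarrow> (nat \<Rightarrow> real) \<Rightarrow> bool" where
  "is_sorted_eigs X lam \<longleftrightarrow>
     (\<forall>i j. 1 \<le> i \<and> i \<le> j \<and> j \<le> CARD('n) \<longrightarrow> lam j \<le> lam i) \<and>
     (\<forall>mu. det (mat mu - X) = (\<Prod>i=1..CARD('n). mu - lam i)) \<and>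
     (\<forall>i. i \<notin> {1..CARD('n)} \<longrightarrow> lam i = 0)"

definition eigs :: "real^'n^'n \<Rightarrow> nat \<Rightarrow> real" where
  "eigs X = (THE lam. is_sorted_eigs X lam)"

definition lambda_min :: "real^'n^'n \<Rightarrow> real" where
  "lambda_min X = eigs X CARD('n)"

definition is_cholesky_factor :: "real^('a::{finite,wellorder})^('a::{finite,wellorder}) \<Rightarrow> real^('a::{finite,wellorder})^('a::{finite,wellorder}) \<Rightarrow> bool" where
  "is_cholesky_factor A X \<longleftrightarrow> transpose A ** A = X \<and>
     (\<forall>i j. j < i \<longrightarrow> A $ i $ j = 0) \<and> (\<forall>i. 0 \<le> A $ i $ i)"

definition psd_cone :: "(real^'n^'n) set" where
  "psd_cone = {X. transpose X = X \<and> (\<forall>v. 0 \<le> v \<bullet> (X *v v))}"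

definition pos_def :: "real^'n^'n \<Rightarrow> bool" where
  "pos_def X \<longleftrightarrow> transpose X = X \<and> (\<forall>v. v \<noteq> 0 \<longrightarrow> 0 < v \<bullet> (X *v v))"

definition Phi :: "nat \<Rightarrow> real \<Rightarrow> real^'n^'n \<Rightarrow> real" where
  "Phi s t X = (\<Sum>i=1..s. ln (eigs X i + t))"

definition Phi_hat :: "nat \<Rightarrow> real \<Rightarrow> real^'n^'n \<Rightarrow> real" where
  "Phi_hat s t X = Inf {g X | g. concave_on psd_cone g \<and> (\<forall>Y\<in>psd_cone. Phi s t Y \<le> g Y)}"

text \<open>M_t(x) = sum_i x_i a_i a_i^T where a_i is the i-th column of the factor A.\<close>
definition Mmat :: "real^'n^'n \<Rightarrow> real^'n \<Rightarrow> real^'n^'n" where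
  "Mmat A x = (\<Sum>i\<in>UNIV. (x $ i) *\<^sub>R (\<chi> j k. A $ j $ i * A $ k $ i))"

definition feasible :: "nat \<Rightarrow> real^'n \<Rightarrow> bool" where
  "feasible s x \<longleftrightarrow> (\<forall>i. 0 \<le> x $ i \<and> x $ i \<le> 1) \<and> (\<Sum>i\<in>UNIV. x $ i) = real s"

definition z_hat :: "nat \<Rightarrow> real^'n^'n \<Rightarrow> real \<Rightarrow> real" where
  "z_hat s A t = Sup {Phi_hat s t (Mmat A x) | x. feasible s x}"

definition z_hat_D :: "nat \<Rightarrow> real^'n^'n \<Rightarrow> real \<Rightarrow> real" where
  "z_hat_D s A t = Sup {ln (det (Mmat A x + t *\<^sub>R mat 1)) | x. feasible s x}
                   - real (CARD('n) - s) * ln t"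

end

theory Submission
  imports Defs
begin

(* Write t = lambda_min(C) and M = M_t(xs), xs optimal, with eigenvalues lam_1 >= ... >= lam_n
   and an orthonormal eigenbasis u_1, ..., u_n. The concave envelope is never computed: it is
   bounded above by the affine, hence concave, function
     g(Y) = sum_{j<=s} (ln(lam_j + t) - lam_j/(lam_j + t)) + sum_i u_i' Y u_i / (lam_{min(i,s)} + t),
   which majorizes Phi_s(.;t) on the PSD cone. For the top s eigenvalues mu_j of Y this is the
   tangent line of ln at lam_j + t. The weights increase with i, and u_i' Y u_i = sum_j (u_i . v_j)^2 mu_j
   for an orthonormal eigenbasis v of Y; since the doubly stochastic matrix ((u_i . v_j)^2) only
   averages the decreasing sequence mu, the weighted sum of the u_i' Y u_i dominates the weighted
   sum of the sorted mu_i. Hence z_hat <= g(M) = sum_{j<=s} ln(lam_j + t) + sum_{i>s} lam_i/(lam_s + t),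
   while xs is feasible for the determinant problem, so z_hat^D >= sum_i ln(lam_i + t) - (n - s) ln t.
   The difference is sum_{i>s} (ln(1 + lam_i/t) - lam_i/(lam_s + t)), and ln(1 + a) >= a/(1 + a)
   together with lam_i <= lam_{s+1} yields Theta^lb. *)

section \<open>Spectral theorem for real symmetric matrices\<close>

lemma symmetric_matrix_inner:
  fixes Y :: "real^'n^'n"
  assumes "transpose Y = Y"
  shows "x \<bullet> (Y *v y) = (Y *v x) \<bullet> y"
  by (metis assms dot_lmul_matrix transpose_matrix_vector)

definition orthonormal_on :: "nat set \<Rightarrow> (nat \<Rightarrow> 'a::real_inner) \<Rightarrow> bool" where
  "orthonormal_on I v \<longleftrightarrow> (\<forall>i\<in>I. \<forall>j\<in>I. v i \<bullet> v j = (if i = j then 1 else 0))"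

lemma orthonormal_on_inj: "orthonormal_on I v \<Longrightarrow> inj_on v I"
  unfolding orthonormal_on_def inj_on_def by (metis one_neq_zero)

lemma orthonormal_on_nonzero: "orthonormal_on I v \<Longrightarrow> i \<in> I \<Longrightarrow> v i \<noteq> 0"
  unfolding orthonormal_on_def by (metis inner_zero_left zero_neq_one)

lemma rayleigh_maximizer_exists:
  fixes Y :: "real^'n^'n"
  assumes "subspace S" and "S \<noteq> {0}"
  obtains z where "z \<in> S" "z \<bullet> z = 1" "\<forall>y\<in>S. y \<bullet> (Y *v y) \<le> (z \<bullet> (Y *v z)) * (y \<bullet> y)"
proof -
  define K where "K = sphere 0 1 \<inter> S"
  obtain x where "x \<in> S" "x \<noteq> 0" using assms(2) subspace_0[OF assms(1)] by blast
  then have "x /\<^sub>R norm x \<in> K" using subspace_scale[OF assms(1)] by (simp add: K_def)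
  moreover have "compact K"
    unfolding K_def by (intro compact_Int_closed compact_sphere closed_subspace assms(1))
  ultimately obtain z where "z \<in> K" and zmax: "\<forall>y\<in>K. y \<bullet> (Y *v y) \<le> z \<bullet> (Y *v z)"
    using continuous_attains_sup[of K "\<lambda>w. w \<bullet> (Y *v w)"] continuous_on_inner
      continuous_on_id linear_continuous_on[OF matrix_vector_mul_bounded_linear] by blast
  moreover have "y \<bullet> (Y *v y) \<le> (z \<bullet> (Y *v z)) * (y \<bullet> y)" if "y \<in> S" for y
  proof (cases "y = 0")
    case False
    then have "y /\<^sub>R norm y \<in> K" using that subspace_scale[OF assms(1)] by (simp add: K_def)
    then have "(y /\<^sub>R norm y) \<bullet> (Y *v (y /\<^sub>R norm y)) \<le> z \<bullet> (Y *v z)"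
      using zmax by blast
    then have "(y \<bullet> (Y *v y)) / (norm y)\<^sup>2 \<le> z \<bullet> (Y *v z)"
      by (simp add: matrix_vector_mult_scaleR power2_eq_square field_simps)
    then show ?thesis using False by (simp add: divide_le_eq power2_norm_eq_inner mult.commute)
  qed simp
  ultimately show ?thesis using that by (auto simp: K_def norm_eq_1)
qed

lemma rayleigh_maximizer_eigenvector:
  fixes Y :: "real^'n^'n"
  assumes sym: "transpose Y = Y" and S: "subspace S" and inv: "\<forall>y\<in>S. Y *v y \<in> S"
    and z: "z \<in> S" "z \<bullet> z = 1"
    and zmax: "\<forall>y\<in>S. y \<bullet> (Y *v y) \<le> (z \<bullet> (Y *v z)) * (y \<bullet> y)"
  shows "Y *v z = (z \<bullet> (Y *v z)) *\<^sub>R z"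
proof -
  define mu where "mu = z \<bullet> (Y *v z)"
  define r where "r = Y *v z - mu *\<^sub>R z"
  define a where "a = r \<bullet> r"
  define q where "q = r \<bullet> (Y *v r)"
  have rS: "r \<in> S" unfolding r_def using S inv z by (simp add: subspace_diff subspace_scale)
  have rz: "r \<bullet> z = 0"
    by (simp add: r_def mu_def inner_diff_left z(2) inner_commute[of "Y *v z"])
  have rYz: "r \<bullet> (Y *v z) = a"
    by (simp add: a_def r_def inner_diff_right rz[unfolded r_def])
  have zYr: "z \<bullet> (Y *v r) = a"
    using symmetric_matrix_inner[OF sym, of z r] rYz by (simp add: inner_commute)
  \<comment> \<open>perturbing z along r, the Rayleigh quotient would grow to first order unless r = 0\<close>
  have "2 * e * a \<le> e\<^sup>2 * (mu * a - q)" for e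
  proof -
    have "mu + 2 * e * a + e\<^sup>2 * q = (z + e *\<^sub>R r) \<bullet> (Y *v (z + e *\<^sub>R r))"
      by (simp add: matrix_vector_right_distrib matrix_vector_mult_scaleR inner_add_left inner_add_right
          rYz zYr flip: q_def mu_def) (simp add: power2_eq_square algebra_simps)
    also have "\<dots> \<le> mu * ((z + e *\<^sub>R r) \<bullet> (z + e *\<^sub>R r))"
      using zmax S z rS unfolding mu_def by (simp add: subspace_add subspace_scale)
    also have "\<dots> = mu * (1 + e\<^sup>2 * a)"
      by (simp add: inner_add_left inner_add_right z(2) rz inner_commute[of z r] flip: a_def)
        (simp add: power2_eq_square)
    finally have "mu + 2 * e * a + e\<^sup>2 * q \<le> mu * (1 + e\<^sup>2 * a)" .
    then show ?thesis by (simp add: algebra_simps)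
  qed
  note small = this
  have "a \<le> 0"
  proof (rule ccontr)
    assume "\<not> a \<le> 0"
    define e where "e = a / (\<bar>mu * a - q\<bar> + 1)"
    have e: "0 < e" "e * \<bar>mu * a - q\<bar> < a"
      using \<open>\<not> a \<le> 0\<close> by (auto simp: e_def field_simps)
    have "2 * a \<le> e * (mu * a - q)"
      using small[of e] e(1) by (simp add: power2_eq_square mult.assoc)
    also have "\<dots> \<le> e * \<bar>mu * a - q\<bar>" using e(1) by (simp add: mult_left_mono)
    finally show False using e(2) \<open>\<not> a \<le> 0\<close> by simp
  qed
  then have "r = 0" by (metis a_def inner_eq_zero_iff inner_ge_zero order_antisym)
  then show ?thesis by (simp add: r_def mu_def)
qed

lemma symmetric_orthonormal_eigenvectors_upto:
  fixes Y :: "real^'n^'n"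
  assumes sym: "transpose Y = Y"
  shows "k \<le> CARD('n) \<Longrightarrow> \<exists>v lam. orthonormal_on {1..k} v
     \<and> (\<forall>i\<in>{1..k}. Y *v v i = lam i *\<^sub>R v i)
     \<and> (\<forall>i\<in>{1..k}. \<forall>w\<in>orthogonal_comp (v ` {1..<i}). w \<bullet> (Y *v w) \<le> lam i * (w \<bullet> w))"
proof (induction k)
  case 0
  show ?case by (auto simp: orthonormal_on_def)
next
  case (Suc k)
  then obtain v lam where orth: "orthonormal_on {1..k} v"
    and eig: "\<forall>i\<in>{1..k}. Y *v v i = lam i *\<^sub>R v i"
    and max: "\<forall>i\<in>{1..k}. \<forall>w\<in>orthogonal_comp (v ` {1..<i}). w \<bullet> (Y *v w) \<le> lam i * (w \<bullet> w)"
    by auto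
  define S where "S = orthogonal_comp (v ` {1..k})"
  have S: "subspace S" unfolding S_def by (rule subspace_orthogonal_comp)
  have "dim (v ` {1..k}) < DIM(real^'n)"
    using dim_le_card'[of "v ` {1..k}"] card_image_le[of "{1..k}" v] Suc.prems by simp
  then obtain x where "x \<noteq> 0" "\<And>y. y \<in> span (v ` {1..k}) \<Longrightarrow> orthogonal x y"
    using orthogonal_to_subspace_exists by blast
  then have "x \<in> S" "x \<noteq> 0"
    by (auto simp: S_def orthogonal_comp_def orthogonal_commute[of "v _"] intro: span_base)
  then have "S \<noteq> {0}" by blast
  have inv: "\<forall>y\<in>S. Y *v y \<in> S"
  proof
    fix y assume "y \<in> S"
    then have "v j \<bullet> (Y *v y) = 0" if "j \<in> {1..k}" for j
      using that eig by (simp add: symmetric_matrix_inner[OF sym] S_def orthogonal_comp_def orthogonal_def)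
    then show "Y *v y \<in> S" by (simp add: S_def orthogonal_comp_def orthogonal_def)
  qed
  obtain z where zS: "z \<in> S" and zz: "z \<bullet> z = 1"
    and zmax: "\<forall>y\<in>S. y \<bullet> (Y *v y) \<le> (z \<bullet> (Y *v z)) * (y \<bullet> y)"
    using rayleigh_maximizer_exists[OF S \<open>S \<noteq> {0}\<close>] by blast
  define v' where "v' = v(Suc k := z)"
  define lam' where "lam' = lam(Suc k := z \<bullet> (Y *v z))"
  have zv: "z \<bullet> v j = 0" if "j \<in> {1..k}" for j
    using zS that by (simp add: S_def orthogonal_comp_def orthogonal_def inner_commute)
  have "orthonormal_on {1..Suc k} v'"
    using orth zv zz unfolding orthonormal_on_def v'_def
    by (metis (no_types, lifting) atLeastAtMost_iff fun_upd_apply inner_commute le_Suc_eq)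
  moreover have "\<forall>i\<in>{1..Suc k}. Y *v v' i = lam' i *\<^sub>R v' i"
    using eig rayleigh_maximizer_eigenvector[OF sym S inv zS zz zmax]
    by (auto simp: v'_def lam'_def le_Suc_eq)
  moreover have "\<forall>i\<in>{1..Suc k}. \<forall>w\<in>orthogonal_comp (v' ` {1..<i}). w \<bullet> (Y *v w) \<le> lam' i * (w \<bullet> w)"
  proof (intro ballI)
    fix i w assume i: "i \<in> {1..Suc k}" and w: "w \<in> orthogonal_comp (v' ` {1..<i})"
    show "w \<bullet> (Y *v w) \<le> lam' i * (w \<bullet> w)"
    proof (cases "i = Suc k")
      case True
      then have "v' ` {1..<i} = v ` {1..k}" by (auto simp: v'_def)
      then show ?thesis using w zmax True by (simp add: S_def lam'_def)
    next
      case False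
      then have "v' ` {1..<i} = v ` {1..<i}" using i by (auto simp: v'_def)
      then show ?thesis using w max i False by (simp add: lam'_def)
    qed
  qed
  ultimately show ?case by blast
qed

lemma orthonormal_basis_expansion:
  fixes v :: "nat \<Rightarrow> real^'n"
  assumes o: "orthonormal_on {1..CARD('n)} v"
  shows "w = (\<Sum>i=1..CARD('n). (w \<bullet> v i) *\<^sub>R v i)"
proof (rule ccontr)
  let ?n = "CARD('n)"
  define r where "r = w - (\<Sum>i=1..?n. (w \<bullet> v i) *\<^sub>R v i)"
  assume "w \<noteq> (\<Sum>i=1..?n. (w \<bullet> v i) *\<^sub>R v i)"
  then have "r \<noteq> 0" by (simp add: r_def)
  have rv: "r \<bullet> v j = 0" if j: "j \<in> {1..?n}" for j
  proof -
    have "(\<Sum>i=1..?n. (w \<bullet> v i) *\<^sub>R v i) \<bullet> v j = (\<Sum>i=1..?n. (w \<bullet> v i) * (v i \<bullet> v j))"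
      by (simp add: inner_sum_left)
    also have "\<dots> = w \<bullet> v j"
      using o j by (simp add: orthonormal_on_def if_distrib[of "\<lambda>a. _ * a"] cong: if_cong)
    finally show ?thesis by (simp add: r_def inner_diff_left)
  qed
  then have "r \<notin> v ` {1..?n}"
    using o by (force simp: orthonormal_on_def)
  moreover have "independent (insert r (v ` {1..?n}))"
    using o rv \<open>r \<noteq> 0\<close> orthonormal_on_nonzero[OF o]
    by (intro pairwise_orthogonal_independent)
      (auto simp: pairwise_def orthogonal_def orthonormal_on_def inner_commute)
  then have "card (insert r (v ` {1..?n})) \<le> DIM(real^'n)"
    using independent_bound by blast
  ultimately show False
    using card_image[OF orthonormal_on_inj[OF o]] by simp
qed

lemma quadratic_form_eigen_expansion:
  fixes v :: "nat \<Rightarrow> real^'n" and Y :: "real^'n^'n"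
  assumes o: "orthonormal_on {1..CARD('n)} v" and e: "\<forall>i\<in>{1..CARD('n)}. Y *v v i = lam i *\<^sub>R v i"
  shows "w \<bullet> (Y *v w) = (\<Sum>i=1..CARD('n). lam i * (w \<bullet> v i)\<^sup>2)"
proof -
  have "Y *v w = Y *v (\<Sum>i=1..CARD('n). (w \<bullet> v i) *\<^sub>R v i)"
    using orthonormal_basis_expansion[OF o] by metis
  also have "\<dots> = (\<Sum>i=1..CARD('n). (w \<bullet> v i) *\<^sub>R (lam i *\<^sub>R v i))"
    using e by (simp add: vec.sum matrix_vector_mult_scaleR)
  finally show ?thesis
    by (simp add: inner_sum_right power2_eq_square mult_ac)
qed

lemma inner_self_orthonormal_expansion:
  fixes v :: "nat \<Rightarrow> real^'n"
  assumes "orthonormal_on {1..CARD('n)} v"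
  shows "w \<bullet> w = (\<Sum>i=1..CARD('n). (w \<bullet> v i)\<^sup>2)"
  using quadratic_form_eigen_expansion[OF assms, of "mat 1" "\<lambda>_. 1"] by simp

lemma det_orthonormal_eigenbasis:
  fixes X :: "real^'n^'n" and v :: "nat \<Rightarrow> real^'n"
  assumes o: "orthonormal_on {1..CARD('n)} v" and e: "\<forall>i\<in>{1..CARD('n)}. X *v v i = lam i *\<^sub>R v i"
  shows "det X = (\<Prod>i=1..CARD('n). lam i)"
proof -
  let ?n = "CARD('n)"
  obtain h where "bij_betw h {1..?n} (UNIV::'n set)"
    using ex_bij_betw_nat_finite_1[of "UNIV::'n set"] by auto
  then obtain f where f: "bij_betw f (UNIV::'n set) {1..?n}"
    using bij_betw_inv_into by blast
  then have fin: "f c \<in> {1..?n}" and finj: "f c = f c' \<longleftrightarrow> c = c'" for c c'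
    by (auto simp: bij_betw_def inj_on_def)
  have orth: "v (f c) \<bullet> v (f c') = (if c = c' then 1 else 0)" for c c'
    using o fin[of c] fin[of c'] finj[of c c'] by (simp add: orthonormal_on_def)
  define Q :: "real^'n^'n" where "Q = (\<chi> r c. v (f c) $ r)"
  have QZQ: "(transpose Q ** Z ** Q) $ c $ c' = v (f c) \<bullet> (Z *v v (f c'))" for Z :: "real^'n^'n" and c c'
  proof -
    have "(transpose Q ** Z ** Q) $ c $ c' = (\<Sum>k\<in>UNIV. \<Sum>l\<in>UNIV. v (f c) $ l * Z $ l $ k * v (f c') $ k)"
      by (simp add: Q_def matrix_matrix_mult_def transpose_def sum_distrib_right)
    also have "\<dots> = (\<Sum>l\<in>UNIV. \<Sum>k\<in>UNIV. v (f c) $ l * Z $ l $ k * v (f c') $ k)"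
      by (rule sum.swap)
    finally show ?thesis
      by (simp add: inner_vec_def matrix_vector_mult_def sum_distrib_left mult.assoc)
  qed
  have "(transpose Q ** Q) $ c $ c' = v (f c) \<bullet> v (f c')" for c c'
    by (simp add: Q_def matrix_matrix_mult_def transpose_def inner_vec_def)
  then have "transpose Q ** Q = mat 1"
    using orth by (simp add: vec_eq_iff mat_def)
  then have "det Q * det Q = 1"
    using det_mul[of "transpose Q" Q] by simp
  then have "det (transpose Q ** X ** Q) = det X"
    by (simp add: det_mul)
  moreover have "(transpose Q ** X ** Q) $ c $ c' = (if c = c' then lam (f c) else 0)" for c c'
    using QZQ[of X] e fin[of c'] orth[of c c'] by simp
  then have "det (transpose Q ** X ** Q) = (\<Prod>c\<in>UNIV. lam (f c))"
    by (subst det_diagonal) simp_all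
  ultimately show ?thesis
    using prod.reindex_bij_betw[OF f, of lam] by simp
qed

section \<open>Sorted eigenvalues\<close>

lemma prod_linear_factors_antimono_unique:
  fixes l l' :: "nat \<Rightarrow> real"
  shows "(\<forall>i j. 1 \<le> i \<and> i \<le> j \<and> j \<le> k \<longrightarrow> l j \<le> l i) \<Longrightarrow>
         (\<forall>i j. 1 \<le> i \<and> i \<le> j \<and> j \<le> k \<longrightarrow> l' j \<le> l' i) \<Longrightarrow>
         (\<Prod>i=1..k. [:- l i, 1:]) = (\<Prod>i=1..k. [:- l' i, 1:]) \<Longrightarrow> \<forall>i\<in>{1..k}. l i = l' i"
proof (induction k arbitrary: l l')
  case 0
  then show ?case by simp
next
  case (Suc k)
  have "poly (\<Prod>i=1..m. [:- g i, 1:]) x = 0 \<longleftrightarrow> (\<exists>i\<in>{1..m}. x = g i)" for g :: "nat \<Rightarrow> real" and x m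
    by (simp add: poly_prod prod_zero_iff)
  note roots = this[where m="Suc k"]
  have largest_root: "g 1 \<le> g' 1"
    if "\<forall>i j. 1 \<le> i \<and> i \<le> j \<and> j \<le> Suc k \<longrightarrow> g' j \<le> g' i"
      and "(\<Prod>i=1..Suc k. [:- g i, 1:]) = (\<Prod>i=1..Suc k. [:- g' i, 1:])" for g g' :: "nat \<Rightarrow> real"
  proof -
    have "poly (\<Prod>i=1..Suc k. [:- g i, 1:]) (g 1) = 0" unfolding roots by auto
    then have "poly (\<Prod>i=1..Suc k. [:- g' i, 1:]) (g 1) = 0" by (simp only: that(2))
    then obtain i where "i \<in> {1..Suc k}" "g 1 = g' i" unfolding roots by blast
    then show ?thesis using that(1)[rule_format, of 1 i] by simp
  qed
  have "l 1 \<le> l' 1" "l' 1 \<le> l 1"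
    using largest_root[of l' l] largest_root[of l l'] Suc.prems by simp_all
  then have eq1: "l 1 = l' 1" by simp
  have split: "(\<Prod>i=1..Suc k. [:- g i, 1:]) = [:- g 1, 1:] * (\<Prod>i=1..k. [:- g (Suc i), 1:])" for g :: "nat \<Rightarrow> real"
    by (subst prod.atLeast_Suc_atMost) (simp_all only: prod.shift_bounds_cl_Suc_ivl One_nat_def le_add1 plus_1_eq_Suc)
  have "[:- l 1, 1:] * (\<Prod>i=1..k. [:- l (Suc i), 1:]) = [:- l 1, 1:] * (\<Prod>i=1..k. [:- l' (Suc i), 1:])"
    using Suc.prems(3) split[of l] split[of l'] eq1 by simp
  then have "(\<Prod>i=1..k. [:- l (Suc i), 1:]) = (\<Prod>i=1..k. [:- l' (Suc i), 1:])"
    by (simp only: mult_left_cancel pCons_eq_0_iff one_neq_zero simp_thms)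
  moreover have "\<forall>i j. 1 \<le> i \<and> i \<le> j \<and> j \<le> k \<longrightarrow> l (Suc j) \<le> l (Suc i)"
    "\<forall>i j. 1 \<le> i \<and> i \<le> j \<and> j \<le> k \<longrightarrow> l' (Suc j) \<le> l' (Suc i)"
    using Suc.prems(1,2) by auto
  ultimately have IH: "\<forall>i\<in>{1..k}. l (Suc i) = l' (Suc i)"
    using Suc.IH[of "\<lambda>i. l (Suc i)" "\<lambda>i. l' (Suc i)"] by blast
  show ?case
  proof
    fix i assume i: "i \<in> {1..Suc k}"
    show "l i = l' i"
    proof (cases i)
      case (Suc j)
      then show ?thesis using i eq1 IH by (cases j) auto
    qed (use i in simp)
  qed
qed

lemma is_sorted_eigs_unique:
  fixes X :: "real^'n^'n"
  assumes "is_sorted_eigs X l" "is_sorted_eigs X l'"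
  shows "l = l'"
proof
  fix i
  let ?n = "CARD('n)"
  have "poly (\<Prod>i=1..?n. [:- l i, 1:]) = poly (\<Prod>i=1..?n. [:- l' i, 1:])"
    using assms unfolding is_sorted_eigs_def by (simp add: poly_prod fun_eq_iff)
  then have "(\<Prod>i=1..?n. [:- l i, 1:]) = (\<Prod>i=1..?n. [:- l' i, 1:])"
    by (simp add: poly_eq_poly_eq_iff)
  then have "\<forall>i\<in>{1..?n}. l i = l' i"
    using prod_linear_factors_antimono_unique[of ?n l l'] assms unfolding is_sorted_eigs_def by blast
  then show "l i = l' i"
    using assms unfolding is_sorted_eigs_def by (cases "i \<in> {1..?n}") auto
qed

lemma mat_mult_vector: "mat c *v (x::real^'n) = c *\<^sub>R x"
  by (simp add: vec_eq_iff matrix_vector_mult_def mat_def if_distrib[of "\<lambda>a. a * _"] cong: if_cong)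

lemma symmetric_eigs:
  fixes Y :: "real^'n^'n"
  assumes sym: "transpose Y = Y"
  obtains v where "orthonormal_on {1..CARD('n)} v"
    and "\<forall>i\<in>{1..CARD('n)}. Y *v v i = eigs Y i *\<^sub>R v i"
    and "is_sorted_eigs Y (eigs Y)"
proof -
  let ?n = "CARD('n)"
  obtain v lam where o: "orthonormal_on {1..?n} v" and e: "\<forall>i\<in>{1..?n}. Y *v v i = lam i *\<^sub>R v i"
    and max: "\<forall>i\<in>{1..?n}. \<forall>w\<in>orthogonal_comp (v ` {1..<i}). w \<bullet> (Y *v w) \<le> lam i * (w \<bullet> w)"
    using symmetric_orthonormal_eigenvectors_upto[OF sym, of ?n] by auto
  define lam0 where "lam0 i = (if i \<in> {1..?n} then lam i else 0)" for i
  have "lam0 j \<le> lam0 i" if "1 \<le> i" "i \<le> j" "j \<le> ?n" for i j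
  proof -
    have "v j \<in> orthogonal_comp (v ` {1..<i})"
      using o that by (auto simp: orthonormal_on_def orthogonal_comp_def orthogonal_def)
    then have "v j \<bullet> (Y *v v j) \<le> lam i"
      using max o that by (force simp: orthonormal_on_def)
    then show ?thesis using e o that by (simp add: lam0_def orthonormal_on_def)
  qed
  moreover have "det (mat mu - Y) = (\<Prod>i=1..?n. mu - lam0 i)" for mu
  proof -
    have "\<forall>i\<in>{1..?n}. (mat mu - Y) *v v i = (mu - lam i) *\<^sub>R v i"
      using e by (simp add: matrix_vector_mult_diff_rdistrib mat_mult_vector scaleR_diff_left)
    then have "det (mat mu - Y) = (\<Prod>i=1..?n. mu - lam i)"
      by (rule det_orthonormal_eigenbasis[OF o])
    then show ?thesis by (simp add: lam0_def)
  qed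
  ultimately have "is_sorted_eigs Y lam0"
    unfolding is_sorted_eigs_def by (auto simp: lam0_def)
  moreover from this have "eigs Y = lam0"
    unfolding eigs_def by (blast intro: is_sorted_eigs_unique)
  ultimately show ?thesis
    using that o e by (auto simp: lam0_def)
qed

lemma eigs_antimono:
  fixes Y :: "real^'n^'n"
  assumes "transpose Y = Y" "1 \<le> i" "i \<le> j" "j \<le> CARD('n)"
  shows "eigs Y j \<le> eigs Y i"
  using symmetric_eigs[OF assms(1)] assms(2-) unfolding is_sorted_eigs_def by metis

lemma eigs_beyond_dimension:
  fixes Y :: "real^'n^'n"
  assumes "transpose Y = Y" "CARD('n) < i"
  shows "eigs Y i = 0"
  using symmetric_eigs[OF assms(1)] assms(2) unfolding is_sorted_eigs_def by force

lemma eigs_le_of_rayleigh_le: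
  fixes Y :: "real^'n^'n"
  assumes "transpose Y = Y" "0 \<le> K" "\<forall>w. w \<bullet> w = 1 \<longrightarrow> w \<bullet> (Y *v w) \<le> K"
  shows "eigs Y i \<le> K"
proof (cases "i \<in> {1..CARD('n)}")
  case True
  obtain v where o: "orthonormal_on {1..CARD('n)} v" and "\<forall>i\<in>{1..CARD('n)}. Y *v v i = eigs Y i *\<^sub>R v i"
    using symmetric_eigs[OF assms(1)] by blast
  with True have "eigs Y i = v i \<bullet> (Y *v v i)" "v i \<bullet> v i = 1"
    by (simp_all add: orthonormal_on_def)
  then show ?thesis using assms(3) by simp
next
  case False
  then show ?thesis
    using symmetric_eigs[OF assms(1)] assms(2) by (metis is_sorted_eigs_def)
qed

lemma det_add_scaleR_id:
  fixes X :: "real^'n^'n"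
  assumes "transpose X = X"
  shows "det (X + t *\<^sub>R mat 1) = (\<Prod>i=1..CARD('n). eigs X i + t)"
proof -
  obtain v where o: "orthonormal_on {1..CARD('n)} v" and e: "\<forall>i\<in>{1..CARD('n)}. X *v v i = eigs X i *\<^sub>R v i"
    using symmetric_eigs[OF assms] by blast
  have "\<forall>i\<in>{1..CARD('n)}. (X + t *\<^sub>R mat 1) *v v i = (eigs X i + t) *\<^sub>R v i"
    using e by (simp add: matrix_vector_mult_add_rdistrib scaleR_matrix_vector_assoc[symmetric] scaleR_add_left)
  then show ?thesis by (rule det_orthonormal_eigenbasis[OF o])
qed

lemma psd_cone_symmetric: "Y \<in> psd_cone \<Longrightarrow> transpose Y = Y"
  by (simp add: psd_cone_def)

lemma psd_cone_eigs_nonneg: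
  fixes Y :: "real^'n^'n"
  assumes "Y \<in> psd_cone"
  shows "0 \<le> eigs Y i"
proof (cases "i \<in> {1..CARD('n)}")
  case True
  obtain v where o: "orthonormal_on {1..CARD('n)} v" and "\<forall>i\<in>{1..CARD('n)}. Y *v v i = eigs Y i *\<^sub>R v i"
    using symmetric_eigs[OF psd_cone_symmetric[OF assms]] by blast
  with True have "eigs Y i = v i \<bullet> (Y *v v i)"
    by (simp add: orthonormal_on_def)
  then show ?thesis using assms by (simp add: psd_cone_def)
next
  case False
  then show ?thesis
    using symmetric_eigs[OF psd_cone_symmetric[OF assms]] by (metis is_sorted_eigs_def order_refl)
qed

lemma psd_cone_eigs_antimono:
  fixes Y :: "real^'n^'n"
  assumes "Y \<in> psd_cone" "1 \<le> i" "i \<le> j"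
  shows "eigs Y j \<le> eigs Y i"
proof (cases "j \<le> CARD('n)")
  case True
  then show ?thesis using eigs_antimono[OF psd_cone_symmetric] assms by blast
next
  case False
  then show ?thesis
    using eigs_beyond_dimension[OF psd_cone_symmetric[OF assms(1)]] psd_cone_eigs_nonneg[OF assms(1)]
    by simp
qed

lemma ln_det_add_scaleR_id:
  fixes X :: "real^'n^'n"
  assumes "X \<in> psd_cone" "0 < t"
  shows "ln (det (X + t *\<^sub>R mat 1)) = (\<Sum>i=1..CARD('n). ln (eigs X i + t))"
proof -
  have "eigs X i + t \<noteq> 0" for i
    using psd_cone_eigs_nonneg[OF assms(1), of i] assms(2) by simp
  then show ?thesis
    by (simp add: det_add_scaleR_id[OF psd_cone_symmetric[OF assms(1)]] ln_prod)
qed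

lemma lambda_min_pos:
  fixes C :: "real^'n^'n"
  assumes "pos_def C"
  shows "0 < lambda_min C"
proof -
  let ?n = "CARD('n)"
  have "transpose C = C" using assms by (simp add: pos_def_def)
  then obtain v where o: "orthonormal_on {1..?n} v" and "\<forall>i\<in>{1..?n}. C *v v i = eigs C i *\<^sub>R v i"
    using symmetric_eigs by blast
  then have "lambda_min C = v ?n \<bullet> (C *v v ?n)"
    by (simp add: lambda_min_def orthonormal_on_def)
  also have "\<dots> > 0"
    using assms orthonormal_on_nonzero[OF o, of ?n] by (simp add: pos_def_def)
  finally show ?thesis .
qed

section \<open>Doubly stochastic averaging of decreasing sequences\<close>

lemma sum_by_parts_tails:
  fixes w X :: "nat \<Rightarrow> real"
  shows "(\<Sum>i=1..n. w i * X i) = w 1 * (\<Sum>i=1..n. X i) + (\<Sum>k=2..n. (w k - w (k - 1)) * (\<Sum>i=k..n. X i))"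
proof (induction n)
  case (Suc n)
  have "(\<Sum>k=2..Suc n. w k - w (k - 1)) = (\<Sum>i=1..n. w (Suc i) - w i)"
    using sum.shift_bounds_cl_Suc_ivl[of "\<lambda>k. w k - w (k - 1)" 1 n]
    by (simp add: numeral_2_eq_2 del: sum.cl_ivl_Suc)
  also have "\<dots> = w (Suc n) - w 1"
    by (cases n) (simp_all add: sum_Suc_diff)
  finally have telescope: "(\<Sum>k=2..Suc n. w k - w (k - 1)) = w (Suc n) - w 1" .
  have "(\<Sum>k=2..Suc n. (w k - w (k - 1)) * (\<Sum>i=k..Suc n. X i))
      = (\<Sum>k=2..Suc n. (w k - w (k - 1)) * (\<Sum>i=k..n. X i) + (w k - w (k - 1)) * X (Suc n))"
    by (intro sum.cong refl) (simp add: distrib_left)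
  also have "\<dots> = (\<Sum>k=2..Suc n. (w k - w (k - 1)) * (\<Sum>i=k..n. X i)) + (\<Sum>k=2..Suc n. w k - w (k - 1)) * X (Suc n)"
    by (simp only: sum.distrib sum_distrib_right)
  also have "\<dots> = (\<Sum>k=2..n. (w k - w (k - 1)) * (\<Sum>i=k..n. X i)) + (w (Suc n) - w 1) * X (Suc n)"
    unfolding telescope by simp
  finally show ?case
    using Suc by (simp add: algebra_simps)
qed simp

lemma weighted_sum_mono_tails:
  fixes w a b :: "nat \<Rightarrow> real"
  assumes "\<forall>i j. 1 \<le> i \<and> i \<le> j \<and> j \<le> n \<longrightarrow> w i \<le> w j"
    and "(\<Sum>i=1..n. a i) = (\<Sum>i=1..n. b i)"
    and "\<forall>k\<in>{2..n}. (\<Sum>i=k..n. a i) \<le> (\<Sum>i=k..n. b i)"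
  shows "(\<Sum>i=1..n. w i * a i) \<le> (\<Sum>i=1..n. w i * b i)"
proof -
  have "(w k - w (k - 1)) * (\<Sum>i=k..n. a i) \<le> (w k - w (k - 1)) * (\<Sum>i=k..n. b i)"
    if "k \<in> {2..n}" for k
    using assms(1,3) that by (intro mult_left_mono) auto
  then have "(\<Sum>k=2..n. (w k - w (k - 1)) * (\<Sum>i=k..n. a i))
      \<le> (\<Sum>k=2..n. (w k - w (k - 1)) * (\<Sum>i=k..n. b i))"
    by (rule sum_mono)
  then show ?thesis
    unfolding sum_by_parts_tails[of w] assms(2) by (rule add_left_mono)
qed

lemma tail_sum_le_weighted_sum:
  fixes mu r :: "nat \<Rightarrow> real"
  assumes mu: "\<forall>i j. 1 \<le> i \<and> i \<le> j \<and> j \<le> n \<longrightarrow> mu j \<le> mu i"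
    and r: "\<forall>j\<in>{1..n}. 0 \<le> r j \<and> r j \<le> 1"
    and r_total: "(\<Sum>j=1..n. r j) = real (card {k..n})"
    and k: "k \<in> {1..n}"
  shows "(\<Sum>j=k..n. mu j) \<le> (\<Sum>j=1..n. mu j * r j)"
proof -
  define ind where "ind j = (of_bool (k \<le> j) :: real)" for j
  have "{1..n} \<inter> {j. k \<le> j} = {k..n}" using k by auto
  then have tail: "(\<Sum>j=k..n. f j) = (\<Sum>j=1..n. f j * ind j)" for f :: "nat \<Rightarrow> real"
    by (simp add: ind_def sum_mult_of_bool_eq)
  \<comment> \<open>every term is nonnegative because mu decreases and r - ind changes sign at k\<close>
  have "0 \<le> (mu j - mu k) * (r j - ind j)" if "j \<in> {1..n}" for j
    using mu r k that by (cases "k \<le> j") (auto simp: ind_def intro: mult_nonpos_nonpos)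
  then have "0 \<le> (\<Sum>j=1..n. (mu j - mu k) * (r j - ind j))"
    by (rule sum_nonneg)
  also have "\<dots> = (\<Sum>j=1..n. mu j * r j) - (\<Sum>j=1..n. mu j * ind j) - mu k * ((\<Sum>j=1..n. r j) - (\<Sum>j=1..n. ind j))"
    by (simp add: left_diff_distrib right_diff_distrib sum_subtractf sum_distrib_left)
  also have "(\<Sum>j=1..n. ind j) = (\<Sum>j=1..n. r j)"
    using tail[of "\<lambda>_. 1"] r_total by simp
  finally show ?thesis by (simp add: tail)
qed

lemma weighted_sum_le_doubly_stochastic:
  fixes P :: "nat \<Rightarrow> nat \<Rightarrow> real" and w mu :: "nat \<Rightarrow> real"
  assumes P: "\<forall>i\<in>{1..n}. \<forall>j\<in>{1..n}. 0 \<le> P i j"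
    and cols: "\<forall>j\<in>{1..n}. (\<Sum>i=1..n. P i j) = 1"
    and rows: "\<forall>i\<in>{1..n}. (\<Sum>j=1..n. P i j) = 1"
    and w: "\<forall>i j. 1 \<le> i \<and> i \<le> j \<and> j \<le> n \<longrightarrow> w i \<le> w j"
    and mu: "\<forall>i j. 1 \<le> i \<and> i \<le> j \<and> j \<le> n \<longrightarrow> mu j \<le> mu i"
  shows "(\<Sum>j=1..n. w j * mu j) \<le> (\<Sum>i=1..n. w i * (\<Sum>j=1..n. mu j * P i j))"
proof (rule weighted_sum_mono_tails[OF w])
  have "(\<Sum>i=1..n. \<Sum>j=1..n. mu j * P i j) = (\<Sum>j=1..n. mu j * (\<Sum>i=1..n. P i j))"
    by (subst sum.swap) (simp add: sum_distrib_left)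
  then show "(\<Sum>j=1..n. mu j) = (\<Sum>i=1..n. \<Sum>j=1..n. mu j * P i j)"
    using cols by simp
  show "\<forall>k\<in>{2..n}. (\<Sum>j=k..n. mu j) \<le> (\<Sum>i=k..n. \<Sum>j=1..n. mu j * P i j)"
  proof
    fix k assume k: "k \<in> {2..n}"
    define r where "r j = (\<Sum>i=k..n. P i j)" for j
    have "r j \<le> (\<Sum>i=1..n. P i j)" if "j \<in> {1..n}" for j
      unfolding r_def using P that k by (intro sum_mono2) auto
    then have "\<forall>j\<in>{1..n}. 0 \<le> r j \<and> r j \<le> 1"
      using P cols k by (auto simp: r_def intro!: sum_nonneg)
    moreover have "(\<Sum>j=1..n. r j) = real (card {k..n})"
      unfolding r_def using rows k by (subst sum.swap) simp
    ultimately have "(\<Sum>j=k..n. mu j) \<le> (\<Sum>j=1..n. mu j * r j)"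
      using k by (intro tail_sum_le_weighted_sum[OF mu]) auto
    also have "\<dots> = (\<Sum>i=k..n. \<Sum>j=1..n. mu j * P i j)"
      unfolding r_def by (subst sum.swap) (simp add: sum_distrib_left)
    finally show "(\<Sum>j=k..n. mu j) \<le> (\<Sum>i=k..n. \<Sum>j=1..n. mu j * P i j)" .
  qed
qed

lemma weighted_eigs_le_weighted_rayleigh:
  fixes Y :: "real^'n^'n" and u :: "nat \<Rightarrow> real^'n" and w :: "nat \<Rightarrow> real"
  assumes sym: "transpose Y = Y" and u: "orthonormal_on {1..CARD('n)} u"
    and w: "\<forall>i j. 1 \<le> i \<and> i \<le> j \<and> j \<le> CARD('n) \<longrightarrow> w i \<le> w j"
  shows "(\<Sum>j=1..CARD('n). w j * eigs Y j) \<le> (\<Sum>i=1..CARD('n). w i * (u i \<bullet> (Y *v u i)))"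
proof -
  let ?n = "CARD('n)"
  obtain v where v: "orthonormal_on {1..?n} v" and e: "\<forall>i\<in>{1..?n}. Y *v v i = eigs Y i *\<^sub>R v i"
    using symmetric_eigs[OF sym] by blast
  \<comment> \<open>the squared inner products of two orthonormal bases form a doubly stochastic matrix\<close>
  have "(\<Sum>j=1..?n. w j * eigs Y j) \<le> (\<Sum>i=1..?n. w i * (\<Sum>j=1..?n. eigs Y j * (u i \<bullet> v j)\<^sup>2))"
  proof (rule weighted_sum_le_doubly_stochastic[OF _ _ _ w])
    show "\<forall>j\<in>{1..?n}. (\<Sum>i=1..?n. (u i \<bullet> v j)\<^sup>2) = 1"
    proof
      fix j assume "j \<in> {1..?n}"
      then show "(\<Sum>i=1..?n. (u i \<bullet> v j)\<^sup>2) = 1"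
        using inner_self_orthonormal_expansion[OF u, of "v j"] v
        by (simp add: orthonormal_on_def inner_commute)
    qed
    show "\<forall>i\<in>{1..?n}. (\<Sum>j=1..?n. (u i \<bullet> v j)\<^sup>2) = 1"
    proof
      fix i assume "i \<in> {1..?n}"
      then show "(\<Sum>j=1..?n. (u i \<bullet> v j)\<^sup>2) = 1"
        using inner_self_orthonormal_expansion[OF v, of "u i"] u
        by (simp add: orthonormal_on_def)
    qed
    show "\<forall>i j. 1 \<le> i \<and> i \<le> j \<and> j \<le> ?n \<longrightarrow> eigs Y j \<le> eigs Y i"
      using eigs_antimono[OF sym] by blast
  qed simp
  also have "\<dots> = (\<Sum>i=1..?n. w i * (u i \<bullet> (Y *v u i)))"
    by (simp add: quadratic_form_eigen_expansion[OF v e])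
  finally show ?thesis .
qed

section \<open>An affine majorant of the spectral function\<close>

lemma convex_psd_cone: "convex (psd_cone :: (real^'n^'n) set)"
  unfolding convex_def psd_cone_def
proof (intro ballI allI impI CollectI conjI)
  fix X Z :: "real^'n^'n" and a b :: real and w :: "real^'n"
  assume "X \<in> {X. transpose X = X \<and> (\<forall>v. 0 \<le> v \<bullet> (X *v v))}"
    and "Z \<in> {X. transpose X = X \<and> (\<forall>v. 0 \<le> v \<bullet> (X *v v))}"
    and ab: "0 \<le> a" "0 \<le> b" "a + b = 1"
  then have X: "transpose X = X" "0 \<le> w \<bullet> (X *v w)" and Z: "transpose Z = Z" "0 \<le> w \<bullet> (Z *v w)"
    by auto
  show "transpose (a *\<^sub>R X + b *\<^sub>R Z) = a *\<^sub>R X + b *\<^sub>R Z"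
    using X(1) Z(1) by (simp add: vec_eq_iff transpose_def)
  have "w \<bullet> ((a *\<^sub>R X + b *\<^sub>R Z) *v w) = a * (w \<bullet> (X *v w)) + b * (w \<bullet> (Z *v w))"
    by (simp add: matrix_vector_mult_add_rdistrib scaleR_matrix_vector_assoc[symmetric] inner_add_right)
  then show "0 \<le> w \<bullet> ((a *\<^sub>R X + b *\<^sub>R Z) *v w)"
    using X(2) Z(2) ab by simp
qed

lemma Phi_hat_le_concave_majorant:
  assumes "concave_on psd_cone g" "\<forall>Y\<in>psd_cone. Phi s t Y \<le> g Y" "M \<in> psd_cone"
  shows "Phi_hat s t M \<le> g M"
  unfolding Phi_hat_def
proof (rule cInf_lower)
  show "g M \<in> {g M |g. concave_on psd_cone g \<and> (\<forall>Y\<in>psd_cone. Phi s t Y \<le> g Y)}"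
    using assms(1,2) by blast
  show "bdd_below {g M |g. concave_on psd_cone g \<and> (\<forall>Y\<in>psd_cone. Phi s t Y \<le> g Y)}"
    using assms(3) by (auto intro!: bdd_belowI[of _ "Phi s t M"])
qed

lemma ln_le_tangent: "0 < x \<Longrightarrow> 0 < y \<Longrightarrow> ln y \<le> ln x + (y - x) / (x::real)"
  using ln_le_minus_one[of "y / x"] by (simp add: ln_div diff_divide_distrib)

lemma Phi_le_affine_majorant:
  fixes Y :: "real^'n^'n" and u :: "nat \<Rightarrow> real^'n" and lam :: "nat \<Rightarrow> real"
  assumes Y: "Y \<in> psd_cone" and u: "orthonormal_on {1..CARD('n)} u"
    and t: "0 < t" and s: "1 \<le> s" "s \<le> CARD('n)"
    and lam: "\<forall>i. 0 \<le> lam i" "\<forall>i j. 1 \<le> i \<and> i \<le> j \<longrightarrow> lam j \<le> lam i"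
  shows "Phi s t Y \<le> (\<Sum>j=1..s. ln (lam j + t) - lam j / (lam j + t))
                       + (\<Sum>i=1..CARD('n). (u i \<bullet> (Y *v u i)) / (lam (min i s) + t))"
proof -
  let ?n = "CARD('n)"
  define wt where "wt i = 1 / (lam (min i s) + t)" for i
  define mu where "mu = eigs Y"
  have mu: "0 \<le> mu i" for i unfolding mu_def by (rule psd_cone_eigs_nonneg[OF Y])
  have wt_pos: "0 < wt i" for i using lam(1) t by (simp add: wt_def add_nonneg_pos)
  have "ln (mu j + t) \<le> ln (lam j + t) + (mu j - lam j) / (lam j + t)" for j
    using ln_le_tangent[of "lam j + t" "mu j + t"] lam(1) mu[of j] t by (simp add: add_nonneg_pos)
  then have "Phi s t Y \<le> (\<Sum>j=1..s. ln (lam j + t) + (mu j - lam j) / (lam j + t))"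
    unfolding Phi_def mu_def[symmetric] by (intro sum_mono)
  also have "\<dots> = (\<Sum>j=1..s. ln (lam j + t) - lam j / (lam j + t)) + (\<Sum>j=1..s. wt j * mu j)"
    by (simp add: wt_def sum.distrib sum_subtractf diff_divide_distrib)
  also have "(\<Sum>j=1..s. wt j * mu j) \<le> (\<Sum>j=1..?n. wt j * mu j)"
    using s(2) wt_pos mu by (intro sum_mono2) (auto intro: mult_nonneg_nonneg less_imp_le)
  also have "\<dots> \<le> (\<Sum>i=1..?n. wt i * (u i \<bullet> (Y *v u i)))"
    unfolding mu_def
  proof (rule weighted_eigs_le_weighted_rayleigh[OF psd_cone_symmetric[OF Y] u])
    show "\<forall>i j. 1 \<le> i \<and> i \<le> j \<and> j \<le> ?n \<longrightarrow> wt i \<le> wt j"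
      using lam s t unfolding wt_def by (auto intro!: divide_left_mono add_nonneg_pos mult_pos_pos)
  qed
  finally show ?thesis by (simp add: wt_def)
qed

lemma sum_atLeastAtMost_split:
  fixes f :: "nat \<Rightarrow> 'a::comm_monoid_add"
  assumes "s \<le> n"
  shows "(\<Sum>i=1..n. f i) = (\<Sum>i=1..s. f i) + (\<Sum>i=s+1..n. f i)"
  using sum.ub_add_nat[of 1 s f "n - s"] assms by simp

lemma Phi_hat_le_eigs:
  fixes M :: "real^'n^'n"
  assumes M: "M \<in> psd_cone" and t: "0 < t" and s: "1 \<le> s" "s \<le> CARD('n)"
  shows "Phi_hat s t M \<le> (\<Sum>j=1..s. ln (eigs M j + t)) + (\<Sum>i=s+1..CARD('n). eigs M i / (eigs M s + t))"
proof -
  let ?n = "CARD('n)"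
  define lam where "lam = eigs M"
  obtain u where u: "orthonormal_on {1..?n} u" and e: "\<forall>i\<in>{1..?n}. M *v u i = lam i *\<^sub>R u i"
    unfolding lam_def using symmetric_eigs[OF psd_cone_symmetric[OF M]] by blast
  define c where "c = (\<Sum>j=1..s. ln (lam j + t) - lam j / (lam j + t))"
  define g where "g Y = c + (\<Sum>i=1..?n. (u i \<bullet> (Y *v u i)) / (lam (min i s) + t))" for Y
  have "g (a *\<^sub>R X + b *\<^sub>R Z) = a * g X + b * g Z" if "a + b = 1" for a b X Z
  proof -
    have "g (a *\<^sub>R X + b *\<^sub>R Z) = (a + b) * c + a * (g X - c) + b * (g Z - c)"
      using that by (simp add: g_def matrix_vector_mult_add_rdistrib scaleR_matrix_vector_assoc[symmetric]
          inner_add_right add_divide_distrib sum.distrib sum_distrib_left)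
    then show ?thesis using that by (simp add: algebra_simps flip: distrib_right)
  qed
  then have "concave_on psd_cone g"
    by (simp add: concave_on_iff convex_psd_cone)
  moreover have "\<forall>Y\<in>psd_cone. Phi s t Y \<le> g Y"
    unfolding g_def c_def lam_def
    using Phi_le_affine_majorant[OF _ u t s] psd_cone_eigs_nonneg[OF M] psd_cone_eigs_antimono[OF M]
    by blast
  ultimately have "Phi_hat s t M \<le> g M"
    using M by (rule Phi_hat_le_concave_majorant)
  also have "g M = c + (\<Sum>i=1..?n. lam i / (lam (min i s) + t))"
    using e u by (simp add: g_def orthonormal_on_def)
  also have "(\<Sum>i=1..?n. lam i / (lam (min i s) + t))
      = (\<Sum>i=1..s. lam i / (lam (min i s) + t)) + (\<Sum>i=s+1..?n. lam i / (lam (min i s) + t))"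
    by (rule sum_atLeastAtMost_split[OF s(2)])
  also have "\<dots> = (\<Sum>i=1..s. lam i / (lam i + t)) + (\<Sum>i=s+1..?n. lam i / (lam s + t))"
    by (intro arg_cong2[where f = "(+)"] sum.cong) auto
  also have "c + \<dots> = (\<Sum>j=1..s. ln (lam j + t)) + (\<Sum>i=s+1..?n. lam i / (lam s + t))"
    by (simp add: c_def sum_subtractf)
  finally show ?thesis unfolding lam_def .
qed

section \<open>The matrices M_t(x) and the determinant relaxation\<close>

lemma Mmat_quadratic_form:
  "w \<bullet> (Mmat A x *v w) = (\<Sum>i\<in>UNIV. x $ i * (column i A \<bullet> w)\<^sup>2)"
proof -
  have "w \<bullet> (Mmat A x *v w)
      = (\<Sum>j\<in>UNIV. \<Sum>k\<in>UNIV. \<Sum>i\<in>UNIV. x $ i * ((A $ j $ i * w $ j) * (A $ k $ i * w $ k)))"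
    by (simp add: Mmat_def inner_vec_def matrix_vector_mult_def sum_component
        sum_distrib_left sum_distrib_right mult_ac)
  also have "\<dots> = (\<Sum>j\<in>UNIV. \<Sum>i\<in>UNIV. \<Sum>k\<in>UNIV. x $ i * ((A $ j $ i * w $ j) * (A $ k $ i * w $ k)))"
    by (rule sum.cong[OF refl], rule sum.swap)
  also have "\<dots> = (\<Sum>i\<in>UNIV. \<Sum>j\<in>UNIV. \<Sum>k\<in>UNIV. x $ i * ((A $ j $ i * w $ j) * (A $ k $ i * w $ k)))"
    by (rule sum.swap)
  also have "\<dots> = (\<Sum>i\<in>UNIV. x $ i * (column i A \<bullet> w)\<^sup>2)"
    by (simp add: column_def inner_vec_def power2_eq_square sum_distrib_left sum_distrib_right mult_ac)
  finally show ?thesis .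
qed

lemma Mmat_symmetric: "transpose (Mmat A x) = Mmat A x"
  by (simp add: vec_eq_iff transpose_def Mmat_def sum_component mult.commute)

lemma Mmat_psd: "\<forall>i. 0 \<le> x $ i \<Longrightarrow> Mmat A x \<in> psd_cone"
  unfolding psd_cone_def using Mmat_symmetric by (auto simp: Mmat_quadratic_form intro!: sum_nonneg)

lemma eigs_Mmat_le:
  assumes "\<forall>i. 0 \<le> x $ i \<and> x $ i \<le> 1"
  shows "eigs (Mmat A x) k \<le> (\<Sum>i\<in>UNIV. (norm (column i A))\<^sup>2)"
proof (rule eigs_le_of_rayleigh_le[OF Mmat_symmetric])
  show "0 \<le> (\<Sum>i\<in>UNIV. (norm (column i A))\<^sup>2)" by (simp add: sum_nonneg)
  show "\<forall>w. w \<bullet> w = 1 \<longrightarrow> w \<bullet> (Mmat A x *v w) \<le> (\<Sum>i\<in>UNIV. (norm (column i A))\<^sup>2)"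
  proof (intro allI impI)
    fix w :: "real^'a" assume "w \<bullet> w = 1"
    then have "(column i A \<bullet> w)\<^sup>2 \<le> (norm (column i A))\<^sup>2" for i
      using Cauchy_Schwarz_ineq[of "column i A" w] by (simp add: power2_norm_eq_inner)
    then have "x $ i * (column i A \<bullet> w)\<^sup>2 \<le> (norm (column i A))\<^sup>2" for i
      using assms mult_left_le_one_le[of "(column i A \<bullet> w)\<^sup>2" "x $ i"] by (meson order_trans zero_le_power2)
    then show "w \<bullet> (Mmat A x *v w) \<le> (\<Sum>i\<in>UNIV. (norm (column i A))\<^sup>2)"
      unfolding Mmat_quadratic_form by (intro sum_mono)
  qed
qed

lemma z_hat_D_ge:
  fixes A :: "real^'n^'n"
  assumes t: "0 < t" and x: "feasible s x"
  shows "(\<Sum>i=1..CARD('n). ln (eigs (Mmat A x) i + t)) - real (CARD('n) - s) * ln t \<le> z_hat_D s A t"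
proof -
  let ?K = "\<Sum>i\<in>UNIV. (norm (column i A))\<^sup>2"
  have "ln (det (Mmat A y + t *\<^sub>R mat 1)) \<le> real CARD('n) * ln (?K + t)" if "feasible s y" for y
  proof -
    have y: "\<forall>i. 0 \<le> y $ i \<and> y $ i \<le> 1" using that by (simp add: feasible_def)
    have "0 < eigs (Mmat A y) i + t" for i
      using psd_cone_eigs_nonneg[OF Mmat_psd[of y A]] y t by (simp add: add_nonneg_pos)
    then have "ln (eigs (Mmat A y) i + t) \<le> ln (?K + t)" for i
      using eigs_Mmat_le[OF y, of A i] by (intro ln_mono) auto
    then have "(\<Sum>i=1..CARD('n). ln (eigs (Mmat A y) i + t)) \<le> (\<Sum>i=1..CARD('n). ln (?K + t))"
      by (intro sum_mono)
    then show ?thesis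
      using ln_det_add_scaleR_id[OF Mmat_psd[of y A] t] y by simp
  qed
  then have "bdd_above {ln (det (Mmat A y + t *\<^sub>R mat 1)) | y. feasible s y}"
    by (auto intro!: bdd_aboveI)
  then have "ln (det (Mmat A x + t *\<^sub>R mat 1)) \<le> Sup {ln (det (Mmat A y + t *\<^sub>R mat 1)) | y. feasible s y}"
    using x by (auto intro!: cSup_upper)
  moreover have "\<forall>i. 0 \<le> x $ i" using x by (simp add: feasible_def)
  ultimately show ?thesis
    using ln_det_add_scaleR_id[OF Mmat_psd[of x A] t] by (simp add: z_hat_D_def)
qed

lemma eigengap_le_log_gap:
  fixes lam :: "nat \<Rightarrow> real"
  assumes t: "0 < t" and lam: "\<forall>i. 0 \<le> lam i" and tail: "\<forall>i\<in>{s+1..n}. lam i \<le> lam (s + 1)"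
  shows "(1 / (lam (s + 1) + t) - 1 / (lam s + t)) * (\<Sum>i=s+1..n. lam i)
           \<le> (\<Sum>i=s+1..n. ln (lam i + t) - ln t - lam i / (lam s + t))"
proof -
  have "lam i / (lam (s + 1) + t) \<le> ln (lam i + t) - ln t" if "i \<in> {s+1..n}" for i
  proof -
    have "lam i / (lam (s + 1) + t) \<le> lam i / (lam i + t)"
      using tail that lam t by (intro divide_left_mono) (auto intro: add_nonneg_pos mult_pos_pos)
    also have "\<dots> \<le> ln (lam i + t) - ln t"
      using ln_le_tangent[of "lam i + t" t] lam t by (simp add: add_nonneg_pos)
    finally show ?thesis .
  qed
  then have "(\<Sum>i=s+1..n. lam i / (lam (s + 1) + t) - lam i / (lam s + t))
      \<le> (\<Sum>i=s+1..n. ln (lam i + t) - ln t - lam i / (lam s + t))"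
    by (intro sum_mono) simp
  then show ?thesis
    by (simp add: left_diff_distrib sum_subtractf sum_divide_distrib)
qed

theorem theorem5:
  fixes C A :: "real^('n::{finite,wellorder})^('n::{finite,wellorder})" and s :: nat and xs :: "real^('n::{finite,wellorder})"
  assumes "1 \<le> s" and "s \<le> CARD('n)"
    and "pos_def C"
    and "is_cholesky_factor A (C - lambda_min C *\<^sub>R mat 1)"
    and "feasible s xs"
    and "\<forall>x. feasible s x \<longrightarrow>
           Phi_hat s (lambda_min C) (Mmat A x) \<le> Phi_hat s (lambda_min C) (Mmat A xs)"
  shows "z_hat_D s A (lambda_min C) - z_hat s A (lambda_min C)
           \<ge> (1 / (eigs (Mmat A xs) (s + 1) + lambda_min C) - 1 / (eigs (Mmat A xs) s + lambda_min C))
              * (\<Sum>i=s+1..CARD('n). eigs (Mmat A xs) i)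
       \<and> (1 / (eigs (Mmat A xs) (s + 1) + lambda_min C) - 1 / (eigs (Mmat A xs) s + lambda_min C))
              * (\<Sum>i=s+1..CARD('n). eigs (Mmat A xs) i) \<ge> 0"
proof -
  let ?n = "CARD('n)"
  define t where "t = lambda_min C"
  define M where "M = Mmat A xs"
  define lam where "lam = eigs M"
  have t: "0 < t" unfolding t_def using assms(3) by (rule lambda_min_pos)
  have M: "M \<in> psd_cone" unfolding M_def using assms(5) by (intro Mmat_psd) (simp add: feasible_def)
  have lam: "\<forall>i. 0 \<le> lam i" "\<And>i j. 1 \<le> i \<Longrightarrow> i \<le> j \<Longrightarrow> lam j \<le> lam i"
    unfolding lam_def using psd_cone_eigs_nonneg[OF M] psd_cone_eigs_antimono[OF M] by auto
  have "z_hat s A t = Phi_hat s t M"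
    unfolding z_hat_def M_def t_def by (rule cSup_eq_maximum) (use assms(5,6) in auto)
  also have "\<dots> \<le> (\<Sum>j=1..s. ln (lam j + t)) + (\<Sum>i=s+1..?n. lam i / (lam s + t))"
    unfolding lam_def using M t assms(1,2) by (rule Phi_hat_le_eigs)
  finally have "z_hat_D s A t - z_hat s A t
      \<ge> (\<Sum>i=s+1..?n. ln (lam i + t) - ln t - lam i / (lam s + t))"
    using z_hat_D_ge[OF t assms(5), of A] sum_atLeastAtMost_split[OF assms(2), of "\<lambda>i. ln (lam i + t)"]
    by (simp add: M_def lam_def sum_subtractf)
  moreover have "(1 / (lam (s + 1) + t) - 1 / (lam s + t)) * (\<Sum>i=s+1..?n. lam i)
      \<le> (\<Sum>i=s+1..?n. ln (lam i + t) - ln t - lam i / (lam s + t))"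
    using t lam by (intro eigengap_le_log_gap) auto
  moreover have "0 \<le> (1 / (lam (s + 1) + t) - 1 / (lam s + t)) * (\<Sum>i=s+1..?n. lam i)"
    using t lam assms(1) by (intro mult_nonneg_nonneg sum_nonneg) (auto intro!: divide_left_mono add_nonneg_pos mult_pos_pos)
  ultimately show ?thesis
    unfolding t_def M_def lam_def by linarith
qed

end
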